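(* Let $n\ge 3$ and $f=x^n+a_{n-1}x^{n-1}+\cdots+a_0\in\mathbb{C}[x]$ with roots $r_1,\ldots,r_n$ (with multiplicity). For each integer $m$ put $\varphi_m(x)=f^{(m)}(x)/m!$ if $1\le m\le n$ and $\varphi_m=0$ if $m\le 0$ or $m>n$. Let $M$ be the infinite matrix with entries $M_{2s-1,l}=\varphi_{2(l-s)+2}$, $M_{2s,l}=\varphi_{2(l-s)+1}$ ($s,l\ge1$), and let $H(x)$ be its $(n-2)$th leading principal minor. If indices $i,j,k\in\{1,\ldots,n\}$ satisfy $i<j$, $j\ne k$, $k\ne i$ and $r_k=(r_i+r_j)/2$, then $H(r_k)=0$.
   Context: $f^{(m)}$ is the $m$th derivative of $f$ with respect to $x$. *)

theory Defs
  imports "HOL-Analysis.Analysis" "HOL-Computational_Algebra.Polynomial"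
begin

definition det_nat :: "nat \<Rightarrow> (nat \<Rightarrow> nat \<Rightarrow> 'a::comm_ring_1) \<Rightarrow> 'a" where
  "det_nat N A = (\<Sum>p | p permutes {1..N}. of_int (sign p) * (\<Prod>i\<in>{1..N}. A i (p i)))"

definition phi :: "complex poly \<Rightarrow> int \<Rightarrow> complex poly" where
  "phi f m = (if 1 \<le> m \<and> m \<le> int (degree f)
     then smult (inverse (fact (nat m))) ((pderiv ^^ nat m) f) else 0)"

(* entries of the infinite matrix M (rows/columns indexed from 1):
   M_{2s-1,l} = phi_{2(l-s)+2},  M_{2s,l} = phi_{2(l-s)+1} *)
definition Mentry :: "complex poly \<Rightarrow> nat \<Rightarrow> nat \<Rightarrow> complex poly" where
  "Mentry f r l = (if odd r
     then phi f (2 * (int l - int ((r + 1) div 2)) + 2)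
     else phi f (2 * (int l - int (r div 2)) + 1))"

definition Hpoly :: "complex poly \<Rightarrow> complex poly" where
  "Hpoly f = det_nat (degree f - 2) (Mentry f)"

end

theory Submission imports Defs "Jordan_Normal_Form.Determinant" begin

text \<open>
  Put c = r k and g(x) = f(x + c), so that phi m evaluated at c is the m-th Taylor coefficient
  of g, and the entry of M in row a, column l evaluated at c is the coefficient of x^(2l - a)
  in h = g / x. As r i - c = c - r j = d, we have h(x) = (x^2 - d^2) q(x) with deg q = n - 3.
  The row vector w a = (-1)^(a-1) * (coefficient of x^(a-1) in q) annihilates the leading
  (n-2) x (n-2) block: its product with column l is the coefficient of x^(2l - 1) in the even
  polynomial q(-x) h(x) = (x^2 - d^2) q(-x) q(x), hence zero; and w is nonzero because its last
  entry is, up to sign, the leading coefficient of q.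
\<close>

lemma det_nat_eq_det_mat:
  fixes A :: "nat \<Rightarrow> nat \<Rightarrow> 'a::comm_ring_1"
  shows "det_nat N A = det (mat N N (\<lambda>(i, l). A (Suc i) (Suc l)))"
proof -
  have bij: "bij_betw Suc {0..<N} {1..N}"
    by (simp add: bij_betw_def image_Suc_atLeastLessThan atLeastLessThanSuc_atLeastAtMost)
  let ?F = "map_permutation {0..<N} Suc"
  have F: "bij_betw ?F {\<pi>. \<pi> permutes {0..<N}} {\<pi>. \<pi> permutes {1..N}}"
  proof -
    have "?F p = (\<lambda>x. if x \<in> {1..N} then Suc (p (inv_into {0..<N} Suc x)) else x)" for p
      unfolding map_permutation_def restrict_id_def
      by (auto simp: fun_eq_iff image_Suc_atLeastLessThan atLeastLessThanSuc_atLeastAtMost)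
    then show ?thesis
      using bij_betw_permutations[OF bij] by presburger
  qed
  have "det_nat N A
      = (\<Sum>p | p permutes {0..<N}. of_int (sign (?F p)) * (\<Prod>i\<in>{1..N}. A i (?F p i)))"
    unfolding det_nat_def by (rule sum.reindex_bij_betw[OF F, symmetric])
  also have "\<dots> = (\<Sum>p | p permutes {0..<N}. of_int (sign p) * (\<Prod>i<N. A (Suc i) (Suc (p i))))"
  proof (rule sum.cong[OF refl])
    fix p assume p: "p \<in> {\<pi>. \<pi> permutes {0..<N}}"
    have "sign (?F p) = sign p"
      using p by (intro sign_map_permutation) auto
    moreover have "(\<Prod>i\<in>{1..N}. A i (?F p i)) = (\<Prod>i<N. A (Suc i) (Suc (p i)))"
      using p permutes_in_image[of p "{0..<N}"]
      by (auto simp: prod.atLeast1_atMost_eq map_permutation_apply intro!: prod.cong)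
    ultimately show "of_int (sign (?F p)) * (\<Prod>i\<in>{1..N}. A i (?F p i))
        = of_int (sign p) * (\<Prod>i<N. A (Suc i) (Suc (p i)))"
      by simp
  qed
  also have "\<dots> = det (mat N N (\<lambda>(i, l). A (Suc i) (Suc l)))"
    unfolding det_def by (simp add: atLeast0LessThan)
  finally show ?thesis .
qed

lemma det_nat_eq_0_if_left_null_vector:
  fixes B :: "nat \<Rightarrow> nat \<Rightarrow> 'a::idom"
  assumes null: "\<And>l. l \<in> {1..N} \<Longrightarrow> (\<Sum>a\<in>{1..N}. w a * B a l) = 0"
    and nonzero: "b \<in> {1..N}" "w b \<noteq> 0"
  shows "det_nat N B = 0"
proof -
  let ?M = "mat N N (\<lambda>(i, l). B (Suc i) (Suc l))"
  let ?v = "vec N (\<lambda>i. w (Suc i))"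
  have "?v $ (b - 1) \<noteq> 0"
    using nonzero by auto
  then have "?v \<noteq> 0\<^sub>v N"
    using nonzero by auto
  moreover have "transpose_mat ?M *\<^sub>v ?v = 0\<^sub>v N"
  proof (rule eq_vecI)
    fix l assume "l < dim_vec (0\<^sub>v N :: 'a vec)"
    then have l: "l < N" by simp
    then have "(transpose_mat ?M *\<^sub>v ?v) $ l = (\<Sum>a\<in>{1..N}. w a * B a (Suc l))"
      by (simp add: scalar_prod_def sum.atLeast1_atMost_eq atLeast0LessThan mult.commute)
    also have "\<dots> = 0"
      using null[of "Suc l"] l by simp
    finally show "(transpose_mat ?M *\<^sub>v ?v) $ l = 0\<^sub>v N $ l"
      using l by simp
  qed simp
  ultimately have "det (transpose_mat ?M) = 0"
    using det_0_iff_vec_prod_zero[of "transpose_mat ?M" N] by (metis carrier_vec_dim_vec dim_vec transpose_carrier_mat mat_carrier)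
  then show ?thesis
    by (simp add: det_nat_eq_det_mat det_transpose[of ?M N])
qed

lemma poly_det_nat: "poly (det_nat N A) x = det_nat N (\<lambda>i l. poly (A i l) x)"
  unfolding det_nat_def by (simp add: poly_sum poly_prod)

lemma coeff_pcompose_minus_X:
  "coeff (p \<circ>\<^sub>p [:0, -1:]) t = (-1) ^ t * coeff (p :: 'a::idom poly) t"
  by (induction p arbitrary: t rule: pCons_induct) (auto simp: pcompose_pCons coeff_pCons split: nat.split)

lemma pcompose_minus_X_involutive:
  "(p \<circ>\<^sub>p [:0, -1:]) \<circ>\<^sub>p [:0, -1:] = (p :: 'a::idom poly)"
  by (simp add: poly_eq_iff coeff_pcompose_minus_X flip: power_mult_distrib)

lemma odd_coeff_eq_0_if_even_poly:
  fixes p :: "'a::{idom, ring_char_0} poly"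
  assumes "p \<circ>\<^sub>p [:0, -1:] = p" and "odd t"
  shows "coeff p t = 0"
  using coeff_pcompose_minus_X[of p t] assms by simp

lemma coeff_mult_degree_less:
  fixes p h :: "'a::comm_semiring_1 poly"
  assumes "degree p < N"
  shows "coeff (p * h) m = (\<Sum>t<N. coeff p t * (if t \<le> m then coeff h (m - t) else 0))"
proof -
  have "coeff (p * h) m = (\<Sum>t<N + m + 1. coeff p t * (if t \<le> m then coeff h (m - t) else 0))"
    unfolding coeff_mult by (rule sum.mono_neutral_cong_left) auto
  also have "\<dots> = (\<Sum>t<N. coeff p t * (if t \<le> m then coeff h (m - t) else 0))"
    using assms by (intro sum.mono_neutral_right) (auto simp: coeff_eq_0)
  finally show ?thesis .
qed

lemma higher_pderiv_pcompose_linear: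
  "(pderiv ^^ m) (f \<circ>\<^sub>p [:a, 1:]) = (pderiv ^^ m) f \<circ>\<^sub>p [:a, 1 :: 'a::idom:]"
  by (induction m) (auto simp: pderiv_pcompose pderiv_pCons)

lemma poly_higher_pderiv_eq_fact_coeff:
  "poly ((pderiv ^^ m) f) a = fact m * coeff (f \<circ>\<^sub>p [:a, 1 :: 'a::{idom, semiring_char_0}:]) m"
proof -
  have "poly ((pderiv ^^ m) f) a = coeff ((pderiv ^^ m) f \<circ>\<^sub>p [:a, 1:]) 0"
    by (simp add: poly_pcompose flip: poly_0_coeff_0)
  also have "\<dots> = fact m * coeff (f \<circ>\<^sub>p [:a, 1:]) m"
    by (simp add: coeff_higher_pderiv pochhammer_fact flip: higher_pderiv_pcompose_linear)
  finally show ?thesis .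
qed

lemma poly_phi:
  "poly (phi f m) x = (if 1 \<le> m then coeff (f \<circ>\<^sub>p [:x, 1:]) (nat m) else 0)"
proof -
  have "coeff (f \<circ>\<^sub>p [:x, 1:]) (nat m) = 0" if "int (degree f) < m"
    using that by (intro coeff_eq_0) (simp add: degree_pcompose)
  then show ?thesis
    by (auto simp: phi_def poly_higher_pderiv_eq_fact_coeff)
qed

lemma poly_Mentry:
  "poly (Mentry f a l) x = (if a \<le> 2 * l then coeff (f \<circ>\<^sub>p [:x, 1:]) (2 * l + 1 - a) else 0)"
proof -
  have "Mentry f a l = phi f (2 * int l - int a + 1)"
    by (cases "odd a") (auto simp: Mentry_def elim!: oddE evenE)
  moreover have "nat (2 * int l - int a + 1) = 2 * l + 1 - a"
    by simp
  ultimately show ?thesis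
    by (simp add: poly_phi)
qed

lemma det_nat_coeff_matrix_eq_0_if_even_factor:
  fixes e q :: "'a::{idom, ring_char_0} poly"
  assumes even: "e \<circ>\<^sub>p [:0, -1:] = e" and "q \<noteq> 0" and N: "N = degree q + 1"
  shows "det_nat N (\<lambda>a l. if a \<le> 2 * l then coeff (e * q) (2 * l - a) else 0) = 0"
proof (rule det_nat_eq_0_if_left_null_vector[where w = "\<lambda>a. (-1) ^ (a - 1) * coeff q (a - 1)"])
  let ?q' = "q \<circ>\<^sub>p [:0, -1:]"
  fix l assume l: "l \<in> {1..N}"
  have "(\<Sum>a\<in>{1..N}. (-1) ^ (a - 1) * coeff q (a - 1) *
          (if a \<le> 2 * l then coeff (e * q) (2 * l - a) else 0))
      = (\<Sum>t<N. coeff ?q' t * (if t \<le> 2 * l - 1 then coeff (e * q) (2 * l - 1 - t) else 0))"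
    using l by (auto simp: sum.atLeast1_atMost_eq coeff_pcompose_minus_X intro!: sum.cong)
  also have "\<dots> = coeff (?q' * (e * q)) (2 * l - 1)"
    by (rule coeff_mult_degree_less[symmetric]) (simp add: degree_pcompose N)
  also have "\<dots> = 0"
  proof (rule odd_coeff_eq_0_if_even_poly)
    show "(?q' * (e * q)) \<circ>\<^sub>p [:0, -1:] = ?q' * (e * q)"
      by (simp add: pcompose_mult pcompose_minus_X_involutive even)
    show "odd (2 * l - 1)"
      using l by simp
  qed
  finally show "(\<Sum>a\<in>{1..N}. (-1) ^ (a - 1) * coeff q (a - 1) *
      (if a \<le> 2 * l then coeff (e * q) (2 * l - a) else 0)) = 0" .
next
  show "N \<in> {1..N}" and "(-1) ^ (N - 1) * coeff q (N - 1) \<noteq> 0"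
    using \<open>q \<noteq> 0\<close> by (simp_all add: N)
qed

lemma pcompose_linear_prod_at_midpoint:
  fixes r :: "nat \<Rightarrow> 'a::field_char_0"
  assumes "finite A" "i \<in> A" "j \<in> A" "k \<in> A" "i \<noteq> j" "j \<noteq> k" "k \<noteq> i"
    and mid: "r k = (r i + r j) / 2"
  shows "(\<Prod>t\<in>A. [:- r t, 1:]) \<circ>\<^sub>p [:r k, 1:]
    = pCons 0 ([:- ((r j - r k) ^ 2), 0, 1:] * (\<Prod>t\<in>A - {i, j, k}. [:r k - r t, 1:]))"
proof -
  define d where "d = r j - r k"
  have A: "A = insert k (insert i (insert j (A - {i, j, k})))"
    using assms by auto
  have "(\<Prod>t\<in>A. [:- r t, 1:]) \<circ>\<^sub>p [:r k, 1:] = (\<Prod>t\<in>A. [:r k - r t, 1:])"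
    by (simp add: pcompose_prod pcompose_pCons)
  also have "\<dots> = [:r k - r k, 1:] * ([:r k - r i, 1:] * ([:r k - r j, 1:] *
      (\<Prod>t\<in>A - {i, j, k}. [:r k - r t, 1:])))"
    using assms by (subst A) simp
  also have "\<dots> = [:0, 1:] * ([:d, 1:] * ([:- d, 1:] * (\<Prod>t\<in>A - {i, j, k}. [:r k - r t, 1:])))"
  proof -
    have "r k - r i = d" "r k - r j = - d"
      using mid by (simp_all add: d_def field_simps)
    then show ?thesis
      by simp
  qed
  also have "\<dots> = pCons 0 ([:- (d ^ 2), 0, 1:] * (\<Prod>t\<in>A - {i, j, k}. [:r k - r t, 1:]))"
  proof -
    have "[:d, 1:] * [:- d, 1:] = [:- (d ^ 2), 0, 1:]"
      by (simp add: power2_eq_square)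
    then have "[:0, 1:] * ([:d, 1:] * ([:- d, 1:] * Q)) = [:0, 1:] * ([:- (d ^ 2), 0, 1:] * Q)"
      for Q by (simp only: mult.assoc[of "[:d, 1:]", symmetric])
    then show ?thesis
      by simp
  qed
  finally show ?thesis
    by (simp add: d_def)
qed

theorem lemma1:
  fixes f :: "complex poly" and n :: nat and r :: "nat \<Rightarrow> complex" and i j k :: nat
  assumes "n \<ge> 3"
    and "degree f = n" and "lead_coeff f = 1"
    and "f = (\<Prod>t\<in>{1..n}. [:- r t, 1:])"
    and "i \<in> {1..n}" and "j \<in> {1..n}" and "k \<in> {1..n}"
    and "i < j" and "j \<noteq> k" and "k \<noteq> i"
    and "r k = (r i + r j) / 2"
  shows "poly (Hpoly f) (r k) = 0"
proof -
  define e where "e = [:- ((r j - r k) ^ 2), 0, 1:]"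
  define q where "q = (\<Prod>t\<in>{1..n} - {i, j, k}. [:r k - r t, 1:])"
  have shift: "f \<circ>\<^sub>p [:r k, 1:] = pCons 0 (e * q)"
    unfolding e_def q_def assms(4) using assms(5-11)
    by (intro pcompose_linear_prod_at_midpoint) auto
  have "q \<noteq> 0"
    by (simp add: q_def)
  have "n = degree (f \<circ>\<^sub>p [:r k, 1:])"
    by (simp add: degree_pcompose assms(2))
  also have "\<dots> = degree q + 3"
  proof -
    have "e \<noteq> 0" "degree e = 2"
      by (simp_all add: e_def)
    then show ?thesis
      using \<open>q \<noteq> 0\<close> by (simp add: shift degree_mult_eq)
  qed
  finally have deg_q: "n - 2 = degree q + 1"
    by simp
  have "(\<lambda>a l. poly (Mentry f a l) (r k))
      = (\<lambda>a l. if a \<le> 2 * l then coeff (e * q) (2 * l - a) else 0)"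
    by (auto simp: fun_eq_iff poly_Mentry shift Suc_diff_le)
  then have "poly (Hpoly f) (r k)
      = det_nat (n - 2) (\<lambda>a l. if a \<le> 2 * l then coeff (e * q) (2 * l - a) else 0)"
    by (simp add: Hpoly_def poly_det_nat assms(2))
  also have "\<dots> = 0"
    using \<open>q \<noteq> 0\<close> deg_q
    by (intro det_nat_coeff_matrix_eq_0_if_even_factor) (simp_all add: e_def pcompose_pCons)
  finally show ?thesis .
qed

end
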